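(* Let $\mathbb{K}$ be a number field of degree $k$, $\mathcal{O}$ an order in $\mathbb{K}$ with $\mathbb{Z}$-basis $\omega_1=1,\ldots,\omega_k$, $p\in\mathcal{O}[x]$ monic, and $\mathcal{F}$ a bounded fundamental domain for the action of $\mathbb{Z}^k$ on $\mathbb{R}^k$ with $\mathbf{0}\in\mathrm{int}(\mathcal{F})$. Then there is $\eta>0$ such that, for each choice of sign, $(p(x)\pm\alpha,D_{\mathcal{F},p(0)\pm\alpha})$ has the finiteness property whenever $\alpha=m_1\omega_1+\cdots+m_k\omega_k\in\mathcal{O}$ ($m_j\in\mathbb{Z}$) satisfies $\max\{1,|m_2|,\ldots,|m_k|\}<\eta|m_1|$.
   Context: A bounded fundamental domain for the action of $\mathbb{Z}^k$ on $\mathbb{R}^k$ is a bounded set $\mathcal{F}$ with $\mathbb{R}^k=\mathcal{F}+\mathbb{Z}^k$ and translates pairwise disjoint. For $\vartheta\in\mathcal{O}$, $D_{\mathcal{F},\vartheta}=\{\vartheta\sum_j f_j\omega_j:(f_1,\ldots,f_k)\in\mathcal{F}\}\cap\mathcal{O}$. A pair $(q,\mathcal{D})$ ($q$ monic in $\mathcal{O}[x]$, $\mathcal{D}$ complete residue system modulo $q(0)$ containing $0$) has the finiteness property if every $a\in\mathcal{O}[x]$ satisfies $a\equiv\sum_{j=0}^{\ell-1}d_jx^j\pmod q$ for some $\ell\in\mathbb{N}$, $d_j\in\mathcal{D}$. $\mathrm{int}$ denotes the interior in $\mathbb{R}^k$. *)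

theory Defs
  imports "HOL-Analysis.Analysis" "HOL-Computational_Algebra.Polynomial"
begin

text \<open>The order O is modelled inside the complex numbers (every number field embeds
  into the complex numbers): it is the set of integer combinations of a family
  omega indexed by a finite type 'n, with k = CARD('n).\<close>

definition order_of :: "('n::finite \<Rightarrow> complex) \<Rightarrow> complex set" where
  "order_of \<omega> = range (\<lambda>c::'n \<Rightarrow> int. \<Sum>j\<in>UNIV. of_int (c j) * \<omega> j)"

text \<open>omega is a Z-basis of an order: Z-linearly independent and the Z-span is closed
  under multiplication (together with omega i0 = 1 this makes the span a subring of the
  complex numbers which is a free Z-module of rank k and a domain, i.e. an order in the
  number field Q(omega) of degree k).\<close>

definition is_order_basis :: "('n::finite \<Rightarrow> complex) \<Rightarrow> bool" where
  "is_order_basis \<omega> \<longleftrightarrow>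
     (\<forall>c::'n \<Rightarrow> int. (\<Sum>j\<in>UNIV. of_int (c j) * \<omega> j) = 0 \<longrightarrow> (\<forall>j. c j = 0)) \<and>
     (\<forall>i j. \<omega> i * \<omega> j \<in> order_of \<omega>)"

definition ocoord :: "('n::finite \<Rightarrow> complex) \<Rightarrow> complex \<Rightarrow> 'n \<Rightarrow> int" where
  "ocoord \<omega> \<beta> = (THE c. \<beta> = (\<Sum>j\<in>UNIV. of_int (c j) * \<omega> j))"

text \<open>Multiplication by theta on K tensor R, identified with R^k via the basis omega:
  f corresponds to sum f_j omega_j, and theta * that has coordinates given below.\<close>

definition mulmap :: "('n::finite \<Rightarrow> complex) \<Rightarrow> complex \<Rightarrow> real^'n \<Rightarrow> real^'n" where
  "mulmap \<omega> \<theta> f = (\<chi> i. \<Sum>j\<in>UNIV. f $ j * of_int (ocoord \<omega> (\<theta> * \<omega> j) i))"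

definition Zvecs :: "(real^'n::finite) set" where
  "Zvecs = {z. \<forall>i. z $ i \<in> \<int>}"

definition fundamental_domain :: "(real^'n::finite) set \<Rightarrow> bool" where
  "fundamental_domain F \<longleftrightarrow>
     (\<forall>x. \<exists>f\<in>F. \<exists>z\<in>Zvecs. x = f + z) \<and>
     (\<forall>z1\<in>Zvecs. \<forall>z2\<in>Zvecs. z1 \<noteq> z2 \<longrightarrow> ((\<lambda>f. f + z1) ` F) \<inter> ((\<lambda>f. f + z2) ` F) = {})"

text \<open>D_{F,theta} = { theta * sum f_j omega_j : f in F } intersected with O.\<close>

definition digit_set :: "('n::finite \<Rightarrow> complex) \<Rightarrow> (real^'n) set \<Rightarrow> complex \<Rightarrow> complex set" where
  "digit_set \<omega> F \<theta> =
     {\<beta> \<in> order_of \<omega>. \<exists>f\<in>F. mulmap \<omega> \<theta> f = (\<chi> i. real_of_int (ocoord \<omega> \<beta> i))}"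

definition poly_over :: "complex set \<Rightarrow> complex poly \<Rightarrow> bool" where
  "poly_over R a \<longleftrightarrow> (\<forall>i. coeff a i \<in> R)"

definition pcong_over :: "complex set \<Rightarrow> complex poly \<Rightarrow> complex poly \<Rightarrow> complex poly \<Rightarrow> bool" where
  "pcong_over R q a b \<longleftrightarrow> (\<exists>c. poly_over R c \<and> a - b = q * c)"

definition complete_residue_system :: "complex set \<Rightarrow> complex \<Rightarrow> complex set \<Rightarrow> bool" where
  "complete_residue_system R \<theta> D \<longleftrightarrow> D \<subseteq> R \<and>
     (\<forall>\<beta>\<in>R. \<exists>!d. d \<in> D \<and> (\<exists>\<gamma>\<in>R. \<beta> - d = \<theta> * \<gamma>))"

definition finiteness_property :: "('n::finite \<Rightarrow> complex) \<Rightarrow> complex poly \<Rightarrow> complex set \<Rightarrow> bool" where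
  "finiteness_property \<omega> q D \<longleftrightarrow>
     lead_coeff q = 1 \<and> poly_over (order_of \<omega>) q \<and>
     complete_residue_system (order_of \<omega>) (poly q 0) D \<and> 0 \<in> D \<and>
     (\<forall>a. poly_over (order_of \<omega>) a \<longrightarrow>
        (\<exists>(l::nat) d. (\<forall>j<l. d j \<in> D) \<and>
           pcong_over (order_of \<omega>) q a (\<Sum>j<l. monom (d j) j)))"

end

theory Submission
  imports Defs
begin

text \<open>In the coordinates given by \<omega>, multiplication by \<theta> \<in> \<O> is a linear map of \<real>^k
  preserving \<int>^k. If this map expands every vector by a factor \<mu> and F is a bounded fundamental
  domain containing a ball around 0, then D_{F,\<theta>} is a complete residue system modulo \<theta>
  containing all small elements of \<O>, and every \<beta> \<in> \<O> can be divided as \<beta> = d + \<theta>\<gamma> with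
  |\<gamma>| \<le> |\<beta>|/\<mu> + const. For q with q(0) = \<theta>, splitting off one digit, a = d + \<gamma> q + x a',
  roughly halves the weighted size \<Sum> 2^i |a_i| once \<mu> is large compared with the higher
  coefficients of q; descent therefore ends in polynomials whose coefficients are digits.
  Finally, \<theta> = p(0) \<plusminus> \<alpha> is dominated by its coordinate \<plusminus>m_1: multiplication by \<theta> differs
  from multiplication by \<plusminus>m_1 by a map of norm O(\<eta>|m_1|), so it expands by |m_1|/2.\<close>

lemma pCons_zero_sum: "pCons 0 (\<Sum>x\<in>A. f x) = (\<Sum>x\<in>A. pCons 0 (f x))"
  by (rule poly_eqI) (simp add: coeff_sum coeff_pCons split: nat.split)

locale order_basis =
  fixes \<omega> :: "'n::finite \<Rightarrow> complex" and i0 :: 'n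
  assumes basis: "is_order_basis \<omega>" and omega_i0: "\<omega> i0 = 1"
begin

subsection \<open>Coordinates in the order\<close>

abbreviation \<O> :: "complex set" where "\<O> \<equiv> order_of \<omega>"

definition coords :: "complex \<Rightarrow> real^'n" where
  "coords \<beta> = (\<chi> i. of_int (ocoord \<omega> \<beta> i))"

lemma lincomb_eqD:
  assumes "(\<Sum>j\<in>UNIV. of_int (c j) * \<omega> j) = (\<Sum>j\<in>UNIV. of_int (c' j) * \<omega> j)"
  shows "c = c'"
proof -
  have "(\<Sum>j\<in>UNIV. of_int (c j - c' j) * \<omega> j) = 0"
    using assms by (simp add: algebra_simps sum_subtractf)
  moreover have "\<forall>j. d j = 0" if "(\<Sum>j\<in>UNIV. of_int (d j) * \<omega> j) = 0" for d :: "'n \<Rightarrow> int"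
    using basis that unfolding is_order_basis_def by blast
  ultimately show ?thesis by fastforce
qed

lemma ocoord_lincomb: "ocoord \<omega> (\<Sum>j\<in>UNIV. of_int (c j) * \<omega> j) = c"
  unfolding ocoord_def by (rule the_equality) (auto dest: lincomb_eqD)

lemma lincomb_ocoord: "\<beta> \<in> \<O> \<Longrightarrow> (\<Sum>j\<in>UNIV. of_int (ocoord \<omega> \<beta> j) * \<omega> j) = \<beta>"
  unfolding order_of_def by (auto simp: ocoord_lincomb)

lemma lincomb_in_order: "(\<Sum>j\<in>UNIV. of_int (c j) * \<omega> j) \<in> \<O>"
  unfolding order_of_def by auto

lemma coords_lincomb: "coords (\<Sum>j\<in>UNIV. of_int (c j) * \<omega> j) = (\<chi> i. of_int (c i))"
  by (simp add: coords_def ocoord_lincomb)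

lemma omega_eq_lincomb: "\<omega> j = (\<Sum>i\<in>UNIV. of_int (if i = j then 1 else 0) * \<omega> i)"
proof -
  have "of_int (if i = j then 1 else 0) * \<omega> i = (if i = j then \<omega> j else 0)" for i
    by simp
  then show ?thesis by simp
qed

lemma omega_in_order: "\<omega> j \<in> \<O>"
  by (subst omega_eq_lincomb) (rule lincomb_in_order)

lemma coords_omega: "coords (\<omega> j) = axis j 1"
  by (subst omega_eq_lincomb) (simp add: coords_lincomb axis_def vec_eq_iff)

lemma add_eq_lincomb:
  "\<beta> \<in> \<O> \<Longrightarrow> \<gamma> \<in> \<O> \<Longrightarrow> \<beta> + \<gamma> = (\<Sum>j\<in>UNIV. of_int (ocoord \<omega> \<beta> j + ocoord \<omega> \<gamma> j) * \<omega> j)"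
  by (simp add: distrib_right sum.distrib lincomb_ocoord)

lemma of_int_mult_eq_lincomb:
  "\<beta> \<in> \<O> \<Longrightarrow> of_int c * \<beta> = (\<Sum>j\<in>UNIV. of_int (c * ocoord \<omega> \<beta> j) * \<omega> j)"
  by (simp add: sum_distrib_left[symmetric] mult.assoc lincomb_ocoord)

lemma order_add: "\<beta> \<in> \<O> \<Longrightarrow> \<gamma> \<in> \<O> \<Longrightarrow> \<beta> + \<gamma> \<in> \<O>"
  by (simp only: add_eq_lincomb lincomb_in_order)

lemma of_int_mult_in_order: "\<beta> \<in> \<O> \<Longrightarrow> of_int c * \<beta> \<in> \<O>"
  by (simp only: of_int_mult_eq_lincomb lincomb_in_order)

lemma order_diff: "\<beta> \<in> \<O> \<Longrightarrow> \<gamma> \<in> \<O> \<Longrightarrow> \<beta> - \<gamma> \<in> \<O>"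
  using order_add[of \<beta> "of_int (-1) * \<gamma>"] of_int_mult_in_order[of \<gamma> "-1"] by simp

lemma zero_in_order: "0 \<in> \<O>"
  using lincomb_in_order[of "\<lambda>_. 0"] by simp

lemma order_sum: "(\<And>i. i \<in> S \<Longrightarrow> u i \<in> \<O>) \<Longrightarrow> (\<Sum>i\<in>S. u i) \<in> \<O>"
proof (induction S rule: infinite_finite_induct)
  case (infinite S)
  then show ?case by (simp add: zero_in_order)
next
  case empty
  then show ?case by (simp add: zero_in_order)
next
  case (insert i S)
  then show ?case by (simp add: order_add)
qed

lemma order_mult: "\<beta> \<in> \<O> \<Longrightarrow> \<gamma> \<in> \<O> \<Longrightarrow> \<beta> * \<gamma> \<in> \<O>"
proof -
  assume "\<beta> \<in> \<O>" "\<gamma> \<in> \<O>"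
  then have "\<beta> * \<gamma> = (\<Sum>i\<in>UNIV. \<Sum>j\<in>UNIV.
      of_int (ocoord \<omega> \<beta> i) * (of_int (ocoord \<omega> \<gamma> j) * (\<omega> i * \<omega> j)))"
    by (subst (1 2) lincomb_ocoord[symmetric]) (auto simp: sum_product algebra_simps)
  also have "\<dots> \<in> \<O>"
    using basis unfolding is_order_basis_def by (intro order_sum of_int_mult_in_order) auto
  finally show ?thesis .
qed

lemma of_int_in_order: "of_int c \<in> \<O>"
  using of_int_mult_in_order[OF omega_in_order[of i0]] by (simp add: omega_i0)

lemma coords_add: "\<beta> \<in> \<O> \<Longrightarrow> \<gamma> \<in> \<O> \<Longrightarrow> coords (\<beta> + \<gamma>) = coords \<beta> + coords \<gamma>"
  by (simp only: add_eq_lincomb coords_lincomb) (simp add: coords_def vec_eq_iff)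

lemma coords_diff: "\<beta> \<in> \<O> \<Longrightarrow> \<gamma> \<in> \<O> \<Longrightarrow> coords (\<beta> - \<gamma>) = coords \<beta> - coords \<gamma>"
  using coords_add[of "\<beta> - \<gamma>" \<gamma>] order_diff by simp

lemma coords_of_int_mult: "\<beta> \<in> \<O> \<Longrightarrow> coords (of_int c * \<beta>) = of_int c *\<^sub>R coords \<beta>"
  by (simp only: of_int_mult_eq_lincomb coords_lincomb) (simp add: coords_def vec_eq_iff)

lemma coords_inj:
  assumes "\<beta> \<in> \<O>" "\<gamma> \<in> \<O>" "coords \<beta> = coords \<gamma>"
  shows "\<beta> = \<gamma>"
proof -
  have "ocoord \<omega> \<beta> = ocoord \<omega> \<gamma>"
    using assms(3) by (simp add: coords_def vec_eq_iff fun_eq_iff)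
  then have "(\<Sum>j\<in>UNIV. of_int (ocoord \<omega> \<beta> j) * \<omega> j) = (\<Sum>j\<in>UNIV. of_int (ocoord \<omega> \<gamma> j) * \<omega> j)"
    by simp
  then show ?thesis
    by (simp only: lincomb_ocoord assms(1,2))
qed

lemma coords_in_Zvecs: "coords \<beta> \<in> Zvecs"
  by (simp add: Zvecs_def coords_def)

lemma Zvecs_coordsE:
  assumes "z \<in> Zvecs"
  obtains \<gamma> where "\<gamma> \<in> \<O>" "coords \<gamma> = z"
proof
  have "of_int \<lfloor>z $ j\<rfloor> = z $ j" for j
    using assms unfolding Zvecs_def by (auto elim: Ints_cases)
  then show "coords (\<Sum>j\<in>UNIV. of_int \<lfloor>z $ j\<rfloor> * \<omega> j) = z"
    by (simp add: coords_lincomb vec_eq_iff)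
qed (rule lincomb_in_order)

subsection \<open>Multiplication maps\<close>

lemma coords_zero: "coords 0 = 0"
  using coords_lincomb[of "\<lambda>_. 0"] by (simp add: vec_eq_iff)

lemma coords_sum: "(\<And>i. i \<in> S \<Longrightarrow> u i \<in> \<O>) \<Longrightarrow> coords (\<Sum>i\<in>S. u i) = (\<Sum>i\<in>S. coords (u i))"
  by (induction S rule: infinite_finite_induct) (simp_all add: coords_zero coords_add order_sum)

lemma mulmap_eq_sum: "mulmap \<omega> \<theta> x = (\<Sum>j\<in>UNIV. x $ j *\<^sub>R coords (\<theta> * \<omega> j))"
  by (simp add: mulmap_def coords_def vec_eq_iff sum_component)

lemma mulmap_linear: "linear (mulmap \<omega> \<theta>)"
  by (rule linearI) (simp_all add: mulmap_eq_sum scaleR_add_left sum.distrib scaleR_sum_right)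

lemma coords_mult: "\<beta> \<in> \<O> \<Longrightarrow> \<gamma> \<in> \<O> \<Longrightarrow> coords (\<beta> * \<gamma>) = mulmap \<omega> \<beta> (coords \<gamma>)"
proof -
  assume \<beta>: "\<beta> \<in> \<O>" and \<gamma>: "\<gamma> \<in> \<O>"
  have "\<beta> * \<gamma> = (\<Sum>j\<in>UNIV. of_int (ocoord \<omega> \<gamma> j) * (\<beta> * \<omega> j))"
    by (subst (1) lincomb_ocoord[OF \<gamma>, symmetric]) (simp add: sum_distrib_left mult_ac)
  moreover have "\<beta> * \<omega> j \<in> \<O>" for j
    using \<beta> omega_in_order by (rule order_mult)
  ultimately show ?thesis
    by (simp add: coords_sum of_int_mult_in_order coords_of_int_mult mulmap_eq_sum)
       (simp add: coords_def)
qed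

lemma mulmap_add:
  "\<beta> \<in> \<O> \<Longrightarrow> \<gamma> \<in> \<O> \<Longrightarrow> mulmap \<omega> (\<beta> + \<gamma>) x = mulmap \<omega> \<beta> x + mulmap \<omega> \<gamma> x"
  by (simp add: mulmap_eq_sum distrib_right coords_add order_mult omega_in_order
      scaleR_add_right sum.distrib)

lemma mulmap_of_int: "mulmap \<omega> (of_int c) x = of_int c *\<^sub>R x"
proof -
  have "mulmap \<omega> (of_int c) x = of_int c *\<^sub>R (\<Sum>j\<in>UNIV. x $ j *\<^sub>R axis j 1)"
    by (simp add: mulmap_eq_sum coords_of_int_mult omega_in_order coords_omega scaleR_sum_right mult.commute)
  then show ?thesis
    using basis_expansion[of x] by (simp add: scalar_mult_eq_scaleR)
qed

definition mult_bound :: real where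
  "mult_bound = (\<Sum>i\<in>UNIV. \<Sum>j\<in>UNIV. norm (coords (\<omega> i * \<omega> j)))"

lemma mult_bound_nonneg: "mult_bound \<ge> 0"
  unfolding mult_bound_def by (intro sum_nonneg norm_ge_zero)

lemma norm_mulmap_le_sum: "norm (mulmap \<omega> \<theta> x) \<le> norm x * (\<Sum>j\<in>UNIV. norm (coords (\<theta> * \<omega> j)))"
proof -
  have "norm (mulmap \<omega> \<theta> x) \<le> (\<Sum>j\<in>UNIV. \<bar>x $ j\<bar> * norm (coords (\<theta> * \<omega> j)))"
    unfolding mulmap_eq_sum by (rule order_trans[OF norm_sum]) simp
  also have "\<dots> \<le> (\<Sum>j\<in>UNIV. norm x * norm (coords (\<theta> * \<omega> j)))"
    by (intro sum_mono mult_right_mono component_le_norm_cart) auto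
  finally show ?thesis by (simp add: sum_distrib_left)
qed

lemma norm_mulmap_le: "\<theta> \<in> \<O> \<Longrightarrow> norm (mulmap \<omega> \<theta> x) \<le> mult_bound * norm (coords \<theta>) * norm x"
proof -
  assume \<theta>: "\<theta> \<in> \<O>"
  have "coords (\<theta> * \<omega> j) = mulmap \<omega> (\<omega> j) (coords \<theta>)" for j
    by (metis \<theta> coords_mult mult.commute omega_in_order)
  then have "norm (coords (\<theta> * \<omega> j)) \<le> norm (coords \<theta>) * (\<Sum>i\<in>UNIV. norm (coords (\<omega> j * \<omega> i)))" for j
    using norm_mulmap_le_sum[of "\<omega> j" "coords \<theta>"] by simp
  then have "(\<Sum>j\<in>UNIV. norm (coords (\<theta> * \<omega> j))) \<le> norm (coords \<theta>) * mult_bound"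
    unfolding mult_bound_def sum_distrib_left by (rule sum_mono)
  then have "norm x * (\<Sum>j\<in>UNIV. norm (coords (\<theta> * \<omega> j))) \<le> norm x * (norm (coords \<theta>) * mult_bound)"
    by (rule mult_left_mono) simp
  then show ?thesis
    using norm_mulmap_le_sum[of \<theta> x] by (simp add: mult_ac)
qed

lemma norm_coords_mult_le:
  "\<beta> \<in> \<O> \<Longrightarrow> \<gamma> \<in> \<O> \<Longrightarrow> norm (coords (\<beta> * \<gamma>)) \<le> mult_bound * norm (coords \<beta>) * norm (coords \<gamma>)"
  by (simp add: coords_mult norm_mulmap_le)

lemma norm_coords_diff_mult_le:
  assumes "\<beta> \<in> \<O>" "\<gamma> \<in> \<O>" "\<delta> \<in> \<O>"
  shows "norm (coords (\<beta> - \<gamma> * \<delta>)) \<le> norm (coords \<beta>) + mult_bound * norm (coords \<gamma>) * norm (coords \<delta>)"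
proof -
  have "norm (coords (\<beta> - \<gamma> * \<delta>)) \<le> norm (coords \<beta>) + norm (coords (\<gamma> * \<delta>))"
    using assms by (simp add: coords_diff order_mult norm_triangle_ineq4)
  then show ?thesis
    using norm_coords_mult_le[OF assms(2,3)] by linarith
qed

lemma norm_mulmap_ge:
  assumes "\<theta> \<in> \<O>"
  shows "(\<bar>of_int c\<bar> - mult_bound * norm (coords (\<theta> - of_int c))) * norm x \<le> norm (mulmap \<omega> \<theta> x)"
proof -
  have "mulmap \<omega> \<theta> x = of_int c *\<^sub>R x + mulmap \<omega> (\<theta> - of_int c) x"
    using mulmap_add[of "of_int c" "\<theta> - of_int c" x] assms
    by (simp add: of_int_in_order order_diff mulmap_of_int)
  then have "\<bar>of_int c\<bar> * norm x \<le> norm (mulmap \<omega> \<theta> x) + norm (mulmap \<omega> (\<theta> - of_int c) x)"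
    by (metis norm_scaleR norm_triangle_ineq4 add.commute add_diff_cancel_right' le_diff_eq)
  then show ?thesis
    using norm_mulmap_le[of "\<theta> - of_int c" x] assms by (simp add: of_int_in_order order_diff algebra_simps)
qed

subsection \<open>Digit sets of expanding elements\<close>

definition expanding :: "complex \<Rightarrow> real \<Rightarrow> bool" where
  "expanding \<theta> \<mu> \<longleftrightarrow> (\<forall>x. \<mu> * norm x \<le> norm (mulmap \<omega> \<theta> x))"

lemma mem_digit_set_iff:
  "d \<in> digit_set \<omega> F \<theta> \<longleftrightarrow> d \<in> \<O> \<and> (\<exists>f\<in>F. mulmap \<omega> \<theta> f = coords d)"
  by (simp add: digit_set_def coords_def)

context
  fixes F :: "(real^'n) set" and \<theta> :: complex and \<mu> B r :: real
  assumes theta: "\<theta> \<in> \<O>" and expanding: "expanding \<theta> \<mu>" and mu_pos: "\<mu> > 0"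
    and fundamental: "fundamental_domain F"
    and F_bounded: "F \<subseteq> cball 0 B" and ball_in_F: "ball 0 r \<subseteq> F"
begin

lemma mulmap_inj: "inj (mulmap \<omega> \<theta>)"
proof (rule linear_injective_0[OF mulmap_linear, THEN iffD2], intro allI impI)
  fix x assume "mulmap \<omega> \<theta> x = 0"
  then show "x = 0"
    using expanding mu_pos unfolding expanding_def by (metis mult_le_0_iff norm_le_zero_iff not_less norm_zero)
qed

lemma mulmap_preimage: "\<exists>x. mulmap \<omega> \<theta> x = y \<and> norm x \<le> norm y / \<mu>"
proof -
  obtain x where "mulmap \<omega> \<theta> x = y"
    using linear_injective_imp_surjective[OF mulmap_linear mulmap_inj] by (metis surjD)
  moreover have "norm x \<le> norm y / \<mu>"
    using expanding mu_pos calculation unfolding expanding_def by (auto simp: field_simps)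
  ultimately show ?thesis by blast
qed

lemma divide_with_digit:
  assumes "\<beta> \<in> \<O>"
  obtains d \<gamma> where "d \<in> digit_set \<omega> F \<theta>" "\<gamma> \<in> \<O>" "\<beta> = d + \<theta> * \<gamma>"
    "norm (coords \<gamma>) \<le> norm (coords \<beta>) / \<mu> + B"
proof -
  obtain x where x: "mulmap \<omega> \<theta> x = coords \<beta>" "norm x \<le> norm (coords \<beta>) / \<mu>"
    using mulmap_preimage by blast
  obtain f z where fz: "f \<in> F" "z \<in> Zvecs" "x = f + z"
    using fundamental unfolding fundamental_domain_def by blast
  obtain \<gamma> where \<gamma>: "\<gamma> \<in> \<O>" "coords \<gamma> = z"
    using Zvecs_coordsE[OF fz(2)] by blast
  have \<theta>\<gamma>: "\<theta> * \<gamma> \<in> \<O>"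
    using theta \<gamma>(1) by (rule order_mult)
  have "coords (\<beta> - \<theta> * \<gamma>) = mulmap \<omega> \<theta> x - mulmap \<omega> \<theta> z"
    using assms theta \<gamma> \<theta>\<gamma> x(1) by (simp add: coords_diff coords_mult)
  also have "\<dots> = mulmap \<omega> \<theta> f"
    using fz(3) linear_diff[OF mulmap_linear] by (metis add_diff_cancel)
  finally have "\<beta> - \<theta> * \<gamma> \<in> digit_set \<omega> F \<theta>"
    using fz(1) assms \<theta>\<gamma> by (auto simp: mem_digit_set_iff order_diff)
  moreover have "norm (coords \<gamma>) \<le> norm (coords \<beta>) / \<mu> + B"
  proof -
    have "norm z \<le> norm x + norm f"
      using fz(3) norm_triangle_ineq4[of x f] by simp
    also have "\<dots> \<le> norm (coords \<beta>) / \<mu> + B"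
      using x(2) fz(1) F_bounded by auto
    finally show ?thesis using \<gamma>(2) by simp
  qed
  ultimately show ?thesis using that \<gamma>(1) by simp
qed

lemma small_in_digit_set:
  assumes "\<beta> \<in> \<O>" "norm (coords \<beta>) < \<mu> * r"
  shows "\<beta> \<in> digit_set \<omega> F \<theta>"
proof -
  obtain x where x: "mulmap \<omega> \<theta> x = coords \<beta>" "norm x \<le> norm (coords \<beta>) / \<mu>"
    using mulmap_preimage by blast
  moreover have "norm (coords \<beta>) / \<mu> < r"
    using assms(2) mu_pos by (simp add: field_simps)
  ultimately have "x \<in> F"
    using ball_in_F by auto
  then show ?thesis using assms(1) x(1) by (auto simp: mem_digit_set_iff)
qed

lemma digit_set_cong_eq:
  assumes "d \<in> digit_set \<omega> F \<theta>" "d' \<in> digit_set \<omega> F \<theta>" "\<gamma> \<in> \<O>" "d' - d = \<theta> * \<gamma>"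
  shows "d' = d"
proof -
  obtain f f' where f: "f \<in> F" "mulmap \<omega> \<theta> f = coords d" "f' \<in> F" "mulmap \<omega> \<theta> f' = coords d'"
    and d: "d \<in> \<O>" "d' \<in> \<O>"
    using assms(1,2) by (auto simp: mem_digit_set_iff)
  have "mulmap \<omega> \<theta> (f' - f) = mulmap \<omega> \<theta> (coords \<gamma>)"
    using f d assms(3,4) theta by (simp add: linear_diff[OF mulmap_linear] coords_diff[symmetric] coords_mult)
  then have "f' - f = coords \<gamma>"
    using mulmap_inj by (simp add: inj_eq)
  then have f': "f' = f + coords \<gamma>"
    by (simp add: algebra_simps)
  have "coords \<gamma> = 0"
  proof (rule ccontr)
    assume "coords \<gamma> \<noteq> 0"
    moreover have "f' \<in> (\<lambda>f. f + coords \<gamma>) ` F" "f' \<in> (\<lambda>f. f + 0) ` F"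
      using f f' by auto
    moreover have "0 \<in> Zvecs" by (simp add: Zvecs_def)
    ultimately show False
      using fundamental coords_in_Zvecs unfolding fundamental_domain_def by blast
  qed
  then have "coords d' = coords d"
    using f f' by simp
  then show ?thesis using d coords_inj by blast
qed

lemma complete_residue_system_digit_set: "complete_residue_system \<O> \<theta> (digit_set \<omega> F \<theta>)"
  unfolding complete_residue_system_def
proof (intro conjI ballI)
  show "digit_set \<omega> F \<theta> \<subseteq> \<O>" by (auto simp: mem_digit_set_iff)
  fix \<beta> assume "\<beta> \<in> \<O>"
  then obtain d \<gamma> where d: "d \<in> digit_set \<omega> F \<theta>" "\<gamma> \<in> \<O>" "\<beta> = d + \<theta> * \<gamma>"
    by (rule divide_with_digit)
  show "\<exists>!d. d \<in> digit_set \<omega> F \<theta> \<and> (\<exists>\<gamma>\<in>\<O>. \<beta> - d = \<theta> * \<gamma>)"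
  proof (rule ex1I[of _ d])
    show "d \<in> digit_set \<omega> F \<theta> \<and> (\<exists>\<gamma>\<in>\<O>. \<beta> - d = \<theta> * \<gamma>)" using d by auto
    fix d' assume "d' \<in> digit_set \<omega> F \<theta> \<and> (\<exists>\<gamma>\<in>\<O>. \<beta> - d' = \<theta> * \<gamma>)"
    then obtain \<gamma>' where "d' \<in> digit_set \<omega> F \<theta>" "\<gamma>' \<in> \<O>" "\<beta> - d' = \<theta> * \<gamma>'" by blast
    with d show "d' = d"
      by (intro digit_set_cong_eq[of d d' "\<gamma> - \<gamma>'"]) (auto simp: order_diff algebra_simps)
  qed
qed
end

subsection \<open>Finiteness by descent\<close>

lemma poly_over_const: "c \<in> \<O> \<Longrightarrow> poly_over \<O> [:c:]"
  unfolding poly_over_def by (simp add: coeff_pCons zero_in_order split: nat.split)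

lemma poly_over_add: "poly_over \<O> a \<Longrightarrow> poly_over \<O> b \<Longrightarrow> poly_over \<O> (a + b)"
  unfolding poly_over_def by (simp add: order_add)

lemma poly_over_pCons: "c \<in> \<O> \<Longrightarrow> poly_over \<O> a \<Longrightarrow> poly_over \<O> (pCons c a)"
  unfolding poly_over_def by (simp add: coeff_pCons split: nat.split)

lemma poly_0_in_order: "poly_over \<O> a \<Longrightarrow> poly a 0 \<in> \<O>"
  unfolding poly_over_def by (simp add: poly_0_coeff_0)

definition has_digit_expansion :: "complex poly \<Rightarrow> complex set \<Rightarrow> complex poly \<Rightarrow> bool" where
  "has_digit_expansion q D a \<longleftrightarrow>
     (\<exists>(l::nat) d. (\<forall>j<l. d j \<in> D) \<and> pcong_over \<O> q a (\<Sum>j<l. monom (d j) j))"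

lemma has_digit_expansionI:
  assumes "\<And>i. coeff a i \<in> D"
  shows "has_digit_expansion q D a"
proof -
  have "(\<Sum>j<Suc (degree a). monom (coeff a j) j) = a"
    using poly_as_sum_of_monoms[of a] by (simp add: lessThan_Suc_atMost)
  moreover have "poly_over \<O> 0"
    unfolding poly_over_def using zero_in_order by simp
  ultimately show ?thesis
    using assms unfolding has_digit_expansion_def pcong_over_def by (metis mult_zero_right diff_self)
qed

lemma has_digit_expansion_pCons:
  assumes "has_digit_expansion q D a" "d \<in> D" "\<gamma> \<in> \<O>"
  shows "has_digit_expansion q D ([:d:] + smult \<gamma> q + pCons 0 a)"
proof -
  obtain l e c where e: "\<forall>j<l. e j \<in> D" "poly_over \<O> c" "a - (\<Sum>j<l. monom (e j) j) = q * c"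
    using assms(1) unfolding has_digit_expansion_def pcong_over_def by blast
  define e' where "e' j = (if j = 0 then d else e (j - 1))" for j
  have "(\<Sum>j<Suc l. monom (e' j) j) = [:d:] + pCons 0 (\<Sum>j<l. monom (e j) j)"
    unfolding sum.lessThan_Suc_shift by (simp add: e'_def monom_Suc monom_0 pCons_zero_sum)
  then have "[:d:] + smult \<gamma> q + pCons 0 a - (\<Sum>j<Suc l. monom (e' j) j) = q * ([:\<gamma>:] + pCons 0 c)"
    using e(3) by (simp add: algebra_simps)
  moreover have "poly_over \<O> ([:\<gamma>:] + pCons 0 c)"
    using assms(3) e(2) zero_in_order by (simp add: poly_over_add poly_over_const poly_over_pCons)
  moreover have "\<forall>j<Suc l. e' j \<in> D"
    using e(1) assms(2) by (simp add: e'_def)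
  ultimately show ?thesis
    unfolding has_digit_expansion_def pcong_over_def by blast
qed

definition weight :: "complex poly \<Rightarrow> real" where
  "weight a = (\<Sum>i\<le>degree a. 2 ^ i * norm (coords (coeff a i)))"

definition tail_size :: "complex poly \<Rightarrow> real" where
  "tail_size q = (\<Sum>i<degree q. 2 ^ i * norm (coords (coeff q (Suc i))))"

lemma weight_eq_sum_lessThan:
  assumes "degree a < N"
  shows "weight a = (\<Sum>i<N. 2 ^ i * norm (coords (coeff a i)))"
  unfolding weight_def using assms
  by (intro sum.mono_neutral_left) (auto simp: coeff_eq_0 coords_zero)

lemma tail_size_eq_sum_lessThan:
  assumes "degree q \<le> N"
  shows "tail_size q = (\<Sum>i<N. 2 ^ i * norm (coords (coeff q (Suc i))))"
  unfolding tail_size_def using assms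
  by (intro sum.mono_neutral_left) (auto simp: coeff_eq_0 coords_zero)

lemma norm_coords_coeff_le_weight: "norm (coords (coeff a i)) \<le> weight a"
proof (cases "i \<le> degree a")
  case True
  have "norm (coords (coeff a i)) \<le> 2 ^ i * norm (coords (coeff a i))"
    by (simp add: mult_le_cancel_right1)
  also have "\<dots> \<le> weight a"
    unfolding weight_def using True
    by (intro member_le_sum[where f = "\<lambda>i. 2 ^ i * norm (coords (coeff a i))"]) auto
  finally show ?thesis .
next
  case False
  then show ?thesis
    unfolding weight_def by (simp add: coeff_eq_0 coords_zero sum_nonneg)
qed

lemma weight_nonneg: "weight a \<ge> 0"
  unfolding weight_def by (intro sum_nonneg) simp

lemma tail_size_nonneg: "tail_size q \<ge> 0"
  unfolding tail_size_def by (intro sum_nonneg) simp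

lemma weight_shift_le:
  assumes "poly_over \<O> a" "poly_over \<O> q" "\<gamma> \<in> \<O>"
    and coeff_a': "\<And>i. coeff a' i = coeff a (Suc i) - \<gamma> * coeff q (Suc i)"
  shows "weight a' \<le> (weight a - norm (coords (coeff a 0))) / 2
    + mult_bound * norm (coords \<gamma>) * tail_size q"
proof -
  have coeff_in: "coeff a i \<in> \<O>" "coeff q i \<in> \<O>" for i
    using assms(1,2) unfolding poly_over_def by auto
  define N where "N = Suc (max (degree a) (degree q))"
  define A where "A = (\<Sum>i<N. 2 ^ i * norm (coords (coeff a (Suc i))))"
  have "weight a = (\<Sum>i<Suc N. 2 ^ i * norm (coords (coeff a i)))"
    by (rule weight_eq_sum_lessThan) (simp add: N_def)
  also have "\<dots> = norm (coords (coeff a 0)) + 2 * A"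
    unfolding sum.lessThan_Suc_shift A_def by (simp add: sum_distrib_left mult.assoc)
  finally have weight_a: "(weight a - norm (coords (coeff a 0))) / 2 = A"
    by simp
  have coeff_a'_le: "norm (coords (coeff a' i))
      \<le> norm (coords (coeff a (Suc i))) + mult_bound * norm (coords \<gamma>) * norm (coords (coeff q (Suc i)))" for i
    unfolding coeff_a' by (intro norm_coords_diff_mult_le coeff_in assms(3))
  have "degree a' < N"
    unfolding N_def using degree_le[of "max (degree a) (degree q)" a'] by (auto simp: coeff_a' coeff_eq_0)
  then have "weight a' = (\<Sum>i<N. 2 ^ i * norm (coords (coeff a' i)))"
    by (rule weight_eq_sum_lessThan)
  also have "\<dots> \<le> (\<Sum>i<N. 2 ^ i * norm (coords (coeff a (Suc i)))
      + mult_bound * norm (coords \<gamma>) * (2 ^ i * norm (coords (coeff q (Suc i)))))"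
  proof (intro sum_mono)
    fix i
    have "2 ^ i * norm (coords (coeff a' i)) \<le> 2 ^ i * (norm (coords (coeff a (Suc i)))
        + mult_bound * norm (coords \<gamma>) * norm (coords (coeff q (Suc i))))"
      using coeff_a'_le by (intro mult_left_mono) auto
    then show "2 ^ i * norm (coords (coeff a' i)) \<le> 2 ^ i * norm (coords (coeff a (Suc i)))
        + mult_bound * norm (coords \<gamma>) * (2 ^ i * norm (coords (coeff q (Suc i))))"
      by (simp add: algebra_simps)
  qed
  also have "\<dots> = A + mult_bound * norm (coords \<gamma>) * tail_size q"
  proof -
    have "tail_size q = (\<Sum>i<N. 2 ^ i * norm (coords (coeff q (Suc i))))"
      by (rule tail_size_eq_sum_lessThan) (simp add: N_def)
    then show ?thesis
      unfolding A_def by (simp only: sum.distrib sum_distrib_left)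
  qed
  finally show ?thesis
    unfolding weight_a .
qed

context
  fixes F :: "(real^'n) set" and q :: "complex poly" and \<mu> B r :: real
  assumes q_over: "poly_over \<O> q" and expanding: "expanding (poly q 0) \<mu>"
    and fundamental: "fundamental_domain F"
    and F_bounded: "F \<subseteq> cball 0 B" and ball_in_F: "ball 0 r \<subseteq> F" and r_pos: "r > 0"
    and tail_small: "4 * mult_bound * tail_size q \<le> \<mu>"
    and radius_large: "4 * (mult_bound * tail_size q * B + 1) \<le> \<mu> * r"
begin

lemma B_nonneg: "B \<ge> 0"
  using ball_subset_cball_iff[of 0 r 0 B] ball_in_F F_bounded r_pos by auto

lemma tail_bound_nonneg: "mult_bound * tail_size q * B \<ge> 0"
  by (intro mult_nonneg_nonneg mult_bound_nonneg tail_size_nonneg B_nonneg)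

lemma mu_pos: "\<mu> > 0"
proof -
  have "0 < \<mu> * r"
    using radius_large tail_bound_nonneg unfolding distrib_left by linarith
  then show ?thesis using r_pos by (simp add: zero_less_mult_iff)
qed

lemmas division_assms = poly_0_in_order[OF q_over] expanding mu_pos fundamental F_bounded ball_in_F

lemma weight_step:
  assumes a_over: "poly_over \<O> a"
  obtains d \<gamma> a' where "d \<in> digit_set \<omega> F (poly q 0)" "\<gamma> \<in> \<O>" "poly_over \<O> a'"
    "a = [:d:] + smult \<gamma> q + pCons 0 a'"
    "weight a' \<le> weight a / 2 + mult_bound * tail_size q * B"
proof -
  have coeff_in: "coeff a i \<in> \<O>" "coeff q i \<in> \<O>" for i
    using a_over q_over unfolding poly_over_def by auto
  obtain d \<gamma> where d: "d \<in> digit_set \<omega> F (poly q 0)" "\<gamma> \<in> \<O>" "coeff a 0 = d + poly q 0 * \<gamma>"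
    and \<gamma>_small: "norm (coords \<gamma>) \<le> norm (coords (coeff a 0)) / \<mu> + B"
    using divide_with_digit[OF division_assms coeff_in(1)] by blast
  obtain c a' where ca': "a - [:d:] - smult \<gamma> q = pCons c a'"
    by (rule pCons_cases)
  have "c = 0"
    using arg_cong[OF ca', of "\<lambda>p. coeff p 0"] d(3) by (simp add: poly_0_coeff_0)
  then have a_eq: "a = [:d:] + smult \<gamma> q + pCons 0 a'"
    using ca' by (simp add: algebra_simps)
  have coeff_a': "coeff a' i = coeff a (Suc i) - \<gamma> * coeff q (Suc i)" for i
    using arg_cong[OF ca', of "\<lambda>p. coeff p (Suc i)"] by simp
  have a'_over: "poly_over \<O> a'"
    unfolding poly_over_def coeff_a' using coeff_in d(2) by (auto intro: order_diff order_mult)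
  have "mult_bound * norm (coords \<gamma>) * tail_size q
      \<le> (mult_bound * tail_size q) * (norm (coords (coeff a 0)) / \<mu> + B)"
    using \<gamma>_small mult_bound_nonneg tail_size_nonneg[of q]
    by (simp add: mult_ac mult_left_mono)
  also have "\<dots> = (mult_bound * tail_size q) * (norm (coords (coeff a 0)) / \<mu>)
      + mult_bound * tail_size q * B"
    by (simp add: distrib_left)
  also have "\<dots> \<le> \<mu> / 4 * (norm (coords (coeff a 0)) / \<mu>) + mult_bound * tail_size q * B"
    using tail_small mu_pos by (intro add_right_mono mult_right_mono) auto
  also have "\<dots> = norm (coords (coeff a 0)) / 4 + mult_bound * tail_size q * B"
    using mu_pos by simp
  finally have "weight a' \<le> (weight a - norm (coords (coeff a 0))) / 2
      + norm (coords (coeff a 0)) / 4 + mult_bound * tail_size q * B"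
    using weight_shift_le[OF a_over q_over d(2) coeff_a'] by linarith
  then have "weight a' \<le> weight a / 2 - norm (coords (coeff a 0)) / 2
      + norm (coords (coeff a 0)) / 4 + mult_bound * tail_size q * B"
    by (simp add: diff_divide_distrib)
  then have "weight a' \<le> weight a / 2 + mult_bound * tail_size q * B"
    using norm_ge_zero[of "coords (coeff a 0)"] by linarith
  with d a'_over a_eq show ?thesis using that by blast
qed

lemma has_digit_expansion_all:
  "poly_over \<O> a \<Longrightarrow> has_digit_expansion q (digit_set \<omega> F (poly q 0)) a"
proof (induction "nat \<lfloor>weight a\<rfloor>" arbitrary: a rule: less_induct)
  case less
  show ?case
  proof (cases "weight a < 4 * (mult_bound * tail_size q * B + 1)")
    case True
    show ?thesis
    proof (rule has_digit_expansionI)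
      fix i
      have "coeff a i \<in> \<O>"
        using less.prems unfolding poly_over_def by auto
      moreover have "norm (coords (coeff a i)) < \<mu> * r"
        using norm_coords_coeff_le_weight[of a i] True radius_large by linarith
      ultimately show "coeff a i \<in> digit_set \<omega> F (poly q 0)"
        by (rule small_in_digit_set[OF division_assms])
    qed
  next
    case False
    obtain d \<gamma> a' where step: "d \<in> digit_set \<omega> F (poly q 0)" "\<gamma> \<in> \<O>" "poly_over \<O> a'"
      "a = [:d:] + smult \<gamma> q + pCons 0 a'"
      "weight a' \<le> weight a / 2 + mult_bound * tail_size q * B"
      using weight_step[OF less.prems] by blast
    have "weight a' \<le> weight a - 2"
      using False step(5) tail_bound_nonneg unfolding distrib_left by linarith
    then have "nat \<lfloor>weight a'\<rfloor> < nat \<lfloor>weight a\<rfloor>"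
      using weight_nonneg[of a'] by linarith
    then have "has_digit_expansion q (digit_set \<omega> F (poly q 0)) a'"
      using less.hyps step(3) by blast
    then show ?thesis
      unfolding step(4) using step(1,2) by (rule has_digit_expansion_pCons)
  qed
qed

end

lemma finiteness_property_if_expanding:
  assumes "lead_coeff q = 1" "poly_over \<O> q" "expanding (poly q 0) \<mu>"
    and "fundamental_domain F" "F \<subseteq> cball 0 B" "ball 0 r \<subseteq> F" "r > 0"
    and "4 * mult_bound * tail_size q \<le> \<mu>"
    and "4 * (mult_bound * tail_size q * B + 1) \<le> \<mu> * r"
  shows "finiteness_property \<omega> q (digit_set \<omega> F (poly q 0))"
proof -
  note division_assms = division_assms[OF assms(2-9)]
  show ?thesis
    unfolding finiteness_property_def
    using assms(1,2) has_digit_expansion_all[OF assms(2-9)]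
      complete_residue_system_digit_set[OF division_assms]
      small_in_digit_set[OF division_assms zero_in_order]
      mu_pos[OF assms(2-9)] assms(7)
    by (auto simp: has_digit_expansion_def coords_zero)
qed

subsection \<open>Perturbing the constant term\<close>

lemma expanding_if_dominant:
  assumes "\<theta> \<in> \<O>" "2 * mult_bound * norm (coords (\<theta> - of_int c)) \<le> \<bar>of_int c\<bar>"
  shows "expanding \<theta> (\<bar>of_int c\<bar> / 2)"
  unfolding expanding_def
proof
  fix x :: "real^'n"
  have "\<bar>of_int c\<bar> / 2 * norm x \<le> (\<bar>of_int c\<bar> - mult_bound * norm (coords (\<theta> - of_int c))) * norm x"
    using assms(2) by (intro mult_right_mono) auto
  also have "\<dots> \<le> norm (mulmap \<omega> \<theta> x)"
    using assms(1) by (rule norm_mulmap_ge)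
  finally show "\<bar>of_int c\<bar> / 2 * norm x \<le> norm (mulmap \<omega> \<theta> x)" .
qed

lemma norm_coords_minus_leading:
  assumes "\<beta> \<in> \<O>"
  shows "norm (coords (\<beta> + (\<Sum>j\<in>UNIV. of_int (m j) * \<omega> j) - of_int (m i0)))
    \<le> norm (coords \<beta>) + (\<Sum>j\<in>-{i0}. \<bar>of_int (m j)\<bar>)"
proof -
  define m' where "m' j = (if j = i0 then 0 else m j)" for j
  have "of_int (m' j) * \<omega> j = of_int (m j) * \<omega> j - (if j = i0 then of_int (m i0) else 0)" for j
    using omega_i0 by (simp add: m'_def)
  then have "(\<Sum>j\<in>UNIV. of_int (m j) * \<omega> j) - of_int (m i0) = (\<Sum>j\<in>UNIV. of_int (m' j) * \<omega> j)"
    by (simp add: sum_subtractf)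
  then have "coords (\<beta> + (\<Sum>j\<in>UNIV. of_int (m j) * \<omega> j) - of_int (m i0))
      = coords \<beta> + (\<chi> j. of_int (m' j))"
    using assms by (simp add: add_diff_eq[symmetric] coords_add lincomb_in_order coords_lincomb)
  also have "norm \<dots> \<le> norm (coords \<beta>) + (\<Sum>j\<in>UNIV. \<bar>of_int (m' j)\<bar>)"
    using norm_triangle_ineq norm_le_l1_cart[of "\<chi> j. real_of_int (m' j)"] by (fastforce intro: order_trans)
  also have "(\<Sum>j\<in>UNIV. \<bar>of_int (m' j)\<bar>) = (\<Sum>j\<in>-{i0}. \<bar>real_of_int (m j)\<bar>)"
    unfolding m'_def by (simp add: if_distrib sum.If_cases Compl_eq_Diff_UNIV)
  finally show ?thesis .
qed

lemma tail_size_add_const: "degree p \<ge> 1 \<Longrightarrow> tail_size (p + [:\<alpha>:]) = tail_size p"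
  by (simp add: tail_size_def degree_add_eq_left)

lemma expanding_perturbed:
  fixes m :: "'n \<Rightarrow> int"
  assumes "\<beta> \<in> \<O>" and L: "4 * mult_bound * (norm (coords \<beta>) + real CARD('n)) \<le> L" "L > 0"
    and m_i0: "L < \<bar>of_int (m i0)\<bar>"
    and m_other: "\<And>j. j \<noteq> i0 \<Longrightarrow> \<bar>of_int (m j)\<bar> < \<bar>of_int (m i0)\<bar> / L"
  shows "expanding (\<beta> + (\<Sum>j\<in>UNIV. of_int (m j) * \<omega> j)) (\<bar>of_int (m i0)\<bar> / 2)"
proof -
  have "0 \<le> 4 * mult_bound * norm (coords \<beta>)" "0 \<le> 4 * mult_bound * real CARD('n)"
    by (simp_all add: mult_bound_nonneg)
  then have L_split: "4 * mult_bound * norm (coords \<beta>) \<le> L" "4 * mult_bound * real CARD('n) \<le> L"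
    using L(1) unfolding distrib_left by linarith+
  define M where "M = \<bar>real_of_int (m i0)\<bar>"
  define S where "S = (\<Sum>j\<in>-{i0}. \<bar>real_of_int (m j)\<bar>)"
  have "S \<le> (\<Sum>j\<in>-{i0}. M / L)"
    unfolding S_def using m_other by (intro sum_mono) (auto simp: M_def less_imp_le)
  also have "\<dots> = real (card (-{i0})) * (M / L)"
    by simp
  also have "\<dots> \<le> real CARD('n) * (M / L)"
    using m_i0 L(2) by (intro mult_right_mono of_nat_mono card_mono) (auto simp: M_def)
  finally have "2 * mult_bound * S \<le> 2 * mult_bound * (real CARD('n) * (M / L))"
    using mult_bound_nonneg by (intro mult_left_mono) auto
  also have "\<dots> = (2 * mult_bound * real CARD('n)) * (M / L)"
    by (simp add: mult_ac)
  also have "\<dots> \<le> (L / 2) * (M / L)"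
    using L_split(2) L(2) m_i0 by (intro mult_right_mono) (auto simp: M_def)
  also have "\<dots> = M / 2"
    using L(2) by simp
  finally have "2 * mult_bound * S \<le> M / 2" .
  moreover have "2 * mult_bound * norm (coords (\<beta> + (\<Sum>j\<in>UNIV. of_int (m j) * \<omega> j) - of_int (m i0)))
      \<le> 2 * mult_bound * norm (coords \<beta>) + 2 * mult_bound * S"
    using norm_coords_minus_leading[OF assms(1), of m] mult_bound_nonneg
    unfolding S_def distrib_left[symmetric] mult.assoc by (intro mult_left_mono) auto
  ultimately show ?thesis
    using expanding_if_dominant[where c = "m i0", OF order_add[OF assms(1) lincomb_in_order[of m]]] L_split(1) m_i0
    by (simp add: M_def)
qed

text \<open>Each summand of L pays for one requirement: expansion of multiplication by the perturbed
  constant term, and the two hypotheses of the descent.\<close>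

lemma finiteness_property_perturbed:
  fixes m :: "'n \<Rightarrow> int"
  assumes p: "lead_coeff p = 1" "degree p \<ge> 1" "poly_over \<O> p"
    and F: "fundamental_domain F" "F \<subseteq> cball 0 B" "ball 0 r \<subseteq> F" "r > 0"
    and L: "4 * mult_bound * (norm (coords (poly p 0)) + real CARD('n))
      + 8 * mult_bound * tail_size p + 8 * (mult_bound * tail_size p * B + 1) / r \<le> L"
    and m_i0: "L < \<bar>of_int (m i0)\<bar>"
    and m_other: "\<And>j. j \<noteq> i0 \<Longrightarrow> \<bar>of_int (m j)\<bar> < \<bar>of_int (m i0)\<bar> / L"
  shows "finiteness_property \<omega> (p + [:\<Sum>j\<in>UNIV. of_int (m j) * \<omega> j:])
    (digit_set \<omega> F (poly p 0 + (\<Sum>j\<in>UNIV. of_int (m j) * \<omega> j)))"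
proof -
  define \<alpha> where "\<alpha> = (\<Sum>j\<in>UNIV. of_int (m j) * \<omega> j)"
  define q where "q = p + [:\<alpha>:]"
  define M where "M = \<bar>real_of_int (m i0)\<bar>"
  define K where "K = mult_bound * tail_size p"
  have "B \<ge> 0"
    using ball_subset_cball_iff[of 0 r 0 B] F by auto
  then have "0 \<le> K * B" "0 \<le> K"
    unfolding K_def by (simp_all add: mult_bound_nonneg tail_size_nonneg)
  moreover have "0 \<le> 4 * mult_bound * (norm (coords (poly p 0)) + real CARD('n))"
    by (simp add: mult_bound_nonneg)
  moreover have "0 < 8 * (K * B + 1) / r"
    using \<open>0 \<le> K * B\<close> F(4) by (simp add: add_nonneg_pos)
  ultimately have L_bounds: "4 * mult_bound * (norm (coords (poly p 0)) + real CARD('n)) \<le> L"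
    "8 * K \<le> L" "8 * (K * B + 1) / r \<le> L" "L > 0"
    using L unfolding K_def[symmetric] mult.assoc by linarith+
  have "lead_coeff q = 1"
    using lead_coeff_add_le[of "[:\<alpha>:]" p] p(1,2) by (simp add: q_def add.commute)
  moreover have "poly_over \<O> q" "tail_size q = tail_size p" "poly q 0 = poly p 0 + \<alpha>"
    using p lincomb_in_order
    by (auto simp: q_def \<alpha>_def tail_size_add_const poly_over_add poly_over_const)
  ultimately have q: "lead_coeff q = 1" "poly_over \<O> q" "mult_bound * tail_size q = K"
    "poly q 0 = poly p 0 + \<alpha>"
    by (simp_all add: K_def)
  have "M > L"
    using m_i0 by (simp add: M_def)
  have "expanding (poly q 0) (M / 2)"
    unfolding q(4) \<alpha>_def M_def
    using expanding_perturbed[where m = m, OF poly_0_in_order[OF p(3)] L_bounds(1,4) m_i0 m_other] .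
  moreover have "4 * mult_bound * tail_size q \<le> M / 2"
    using L_bounds(2) \<open>M > L\<close> q(3) by (simp add: mult.assoc)
  moreover have "4 * (mult_bound * tail_size q * B + 1) \<le> M / 2 * r"
  proof -
    have "8 * (K * B + 1) \<le> L * r"
      using L_bounds(3) F(4) by (simp add: field_simps)
    also have "\<dots> \<le> M * r"
      using \<open>M > L\<close> F(4) by simp
    finally show ?thesis
      using q(3) by simp
  qed
  ultimately show ?thesis
    using finiteness_property_if_expanding[OF q(1,2) _ F] q(4) by (simp add: q_def \<alpha>_def)
qed

lemma finiteness_property_perturbed_pm:
  fixes m :: "'n \<Rightarrow> int"
  assumes "lead_coeff p = 1" "degree p \<ge> 1" "poly_over \<O> p"
    and "fundamental_domain F" "F \<subseteq> cball 0 B" "ball 0 r \<subseteq> F" "r > 0"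
    and "4 * mult_bound * (norm (coords (poly p 0)) + real CARD('n))
      + 8 * mult_bound * tail_size p + 8 * (mult_bound * tail_size p * B + 1) / r \<le> L"
    and "L < \<bar>of_int (m i0)\<bar>"
    and "\<And>j. j \<noteq> i0 \<Longrightarrow> \<bar>of_int (m j)\<bar> < \<bar>of_int (m i0)\<bar> / L"
  defines "\<alpha> \<equiv> \<Sum>j\<in>UNIV. of_int (m j) * \<omega> j"
  shows "finiteness_property \<omega> (p + [:\<alpha>:]) (digit_set \<omega> F (poly p 0 + \<alpha>))"
    and "finiteness_property \<omega> (p - [:\<alpha>:]) (digit_set \<omega> F (poly p 0 - \<alpha>))"
proof -
  note perturbed = finiteness_property_perturbed[OF assms(1-8)]
  show "finiteness_property \<omega> (p + [:\<alpha>:]) (digit_set \<omega> F (poly p 0 + \<alpha>))"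
    unfolding \<alpha>_def using perturbed[of m] assms(9,10) by blast
  have "(\<Sum>j\<in>UNIV. of_int ((- m) j) * \<omega> j) = - \<alpha>"
    unfolding \<alpha>_def by (simp add: sum_negf)
  then have "finiteness_property \<omega> (p + [:- \<alpha>:]) (digit_set \<omega> F (poly p 0 + - \<alpha>))"
    using perturbed[of "- m"] assms(9,10) by simp
  moreover have minus_const: "p - [:\<alpha>:] = p + [:- \<alpha>:]"
    by (metis diff_conv_add_uminus minus_pCons minus_zero)
  ultimately show "finiteness_property \<omega> (p - [:\<alpha>:]) (digit_set \<omega> F (poly p 0 - \<alpha>))"
    unfolding minus_const by simp
qed
end

theorem mainTheorem10:
  fixes \<omega> :: "'n::finite \<Rightarrow> complex" and i0 :: 'n
    and p :: "complex poly" and F :: "(real^'n) set"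
  assumes "is_order_basis \<omega>" and "\<omega> i0 = 1"
    and "lead_coeff p = 1" and "degree p \<ge> 1" and "poly_over (order_of \<omega>) p"
    and "bounded F" and "fundamental_domain F" and "0 \<in> interior F"
  shows "\<exists>\<eta>>0. \<forall>m::'n \<Rightarrow> int.
           (1 < \<eta> * \<bar>real_of_int (m i0)\<bar> \<and>
            (\<forall>j. j \<noteq> i0 \<longrightarrow> \<bar>real_of_int (m j)\<bar> < \<eta> * \<bar>real_of_int (m i0)\<bar>)) \<longrightarrow>
           (let \<alpha> = (\<Sum>j\<in>UNIV. of_int (m j) * \<omega> j) in
              finiteness_property \<omega> (p + [:\<alpha>:]) (digit_set \<omega> F (poly p 0 + \<alpha>)) \<and>
              finiteness_property \<omega> (p - [:\<alpha>:]) (digit_set \<omega> F (poly p 0 - \<alpha>)))"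
proof -
  interpret order_basis \<omega> i0
    using assms(1,2) by unfold_locales
  obtain B where "B > 0" "\<forall>f\<in>F. norm f \<le> B"
    using \<open>bounded F\<close> unfolding bounded_pos by blast
  then have "F \<subseteq> cball 0 B"
    by auto
  obtain r where r: "r > 0" "ball 0 r \<subseteq> F"
    using \<open>0 \<in> interior F\<close> mem_interior by blast
  define L where "L = 4 * mult_bound * (norm (coords (poly p 0)) + real CARD('n))
    + 8 * mult_bound * tail_size p + 8 * (mult_bound * tail_size p * B + 1) / r"
  have "L > 0"
    using \<open>B > 0\<close> r(1) mult_bound_nonneg tail_size_nonneg[of p] unfolding L_def
    by (intro add_nonneg_pos add_nonneg_nonneg mult_nonneg_nonneg divide_pos_pos mult_pos_pos) auto
  note perturbed = finiteness_property_perturbed_pm[OF assms(3-5,7) \<open>F \<subseteq> cball 0 B\<close> r(2,1) order.refl,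
      folded L_def]
  show ?thesis
  proof (intro exI[of _ "1 / L"] conjI allI impI)
    fix m :: "'n \<Rightarrow> int"
    assume "1 < 1 / L * \<bar>real_of_int (m i0)\<bar> \<and>
      (\<forall>j. j \<noteq> i0 \<longrightarrow> \<bar>real_of_int (m j)\<bar> < 1 / L * \<bar>real_of_int (m i0)\<bar>)"
    then have "L < \<bar>real_of_int (m i0)\<bar>" "\<And>j. j \<noteq> i0 \<Longrightarrow> \<bar>real_of_int (m j)\<bar> < \<bar>real_of_int (m i0)\<bar> / L"
      using \<open>L > 0\<close> by (auto simp: field_simps)
    then show "let \<alpha> = (\<Sum>j\<in>UNIV. of_int (m j) * \<omega> j) in
      finiteness_property \<omega> (p + [:\<alpha>:]) (digit_set \<omega> F (poly p 0 + \<alpha>)) \<and>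
      finiteness_property \<omega> (p - [:\<alpha>:]) (digit_set \<omega> F (poly p 0 - \<alpha>))"
      using perturbed[of m] unfolding Let_def by blast
  qed (use \<open>L > 0\<close> in simp)
qed

end
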